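(* The set $T^1(\Sigma)$ of isomorphism types of pruned $\Sigma$-trees is generated as a $(2,1,1,0)$-algebra (under pruned multiplication, $+$, $*$ and the trivial tree as identity constant) by the set $\Sigma$ of base trees.
   Context: Let $\Sigma$ be a set. A $\Sigma$-tree is a finite directed graph whose underlying undirected graph is a tree, edges labelled by elements of $\Sigma$, with distinguished start and end vertices such that there is a (possibly empty) directed path from start to end vertex. The trivial tree has a single vertex. A base tree has exactly one edge, its start vertex being the initial vertex of the edge and its end vertex the terminal vertex; the base tree labelled $a$ is identified with $a\in\Sigma$. A morphism $X\to Y$ maps vertices to vertices and edges to edges, preserving initial vertex, terminal vertex and label of each edge, and mapping start/end vertex to start/end vertex; isomorphisms are morphisms bijective on vertices and edges. A retraction is an idempotent morphism $X\to X$, its image a retract; $X$ is pruned if it admits no non-identity retraction. Every tree $X$ has a pruned retract, unique up to isomorphism, with isomorphism type $\overline{X}$. Unpruned operations: $X\times Y$ identifies the end vertex of (a copy of) $X$ with the start vertex of (a disjoint copy of) $Y$, start vertex that of $X$, end vertex that of $Y$; $X^{(+)}$ is $X$ with end vertex moved to the start vertex; $X^{( * )}$ is $X$ with start vertex moved to the end vertex. Pruned operations: $XY=\overline{X\times Y}$, $X^+=\overline{X^{(+)}}$, $X^*=\overline{X^{( * )}}$. *)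

theory Defs
  imports Main
begin

text \<open>The alphabet Sigma is the type 'a. Vertices are natural numbers
 (every finite tree is isomorphic to one of this form). An edge is a triple
 (initial vertex, label, terminal vertex); since the underlying undirected graph is a
 tree there are no parallel edges, so edges are determined by such triples.\<close>

record 'a stree =
  V :: "nat set"
  E :: "(nat \<times> 'a \<times> nat) set"
  st :: nat
  en :: nat

definition erel :: "(nat \<times> 'a \<times> nat) set \<Rightarrow> (nat \<times> nat) set" where
  "erel Es = {(u, v). \<exists>a. (u, a, v) \<in> Es}"

definition is_tree :: "'a stree \<Rightarrow> bool" where
  "is_tree X \<longleftrightarrow>
     finite (V X) \<and> finite (E X) \<and>
     (\<forall>(u, a, v) \<in> E X. u \<in> V X \<and> v \<in> V X) \<and>
     card (V X) = card (E X) + 1 \<and>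
     (\<forall>u\<in>V X. \<forall>v\<in>V X. (u, v) \<in> (erel (E X) \<union> (erel (E X))\<inverse>)\<^sup>*) \<and>
     st X \<in> V X \<and> en X \<in> V X \<and>
     (st X, en X) \<in> (erel (E X))\<^sup>*"

definition emap :: "(nat \<Rightarrow> nat) \<Rightarrow> nat \<times> 'a \<times> nat \<Rightarrow> nat \<times> 'a \<times> nat" where
  "emap f = (\<lambda>(u, a, v). (f u, a, f v))"

definition morphism :: "(nat \<Rightarrow> nat) \<Rightarrow> 'a stree \<Rightarrow> 'a stree \<Rightarrow> bool" where
  "morphism f X Y \<longleftrightarrow>
     f ` V X \<subseteq> V Y \<and> emap f ` E X \<subseteq> E Y \<and>
     f (st X) = st Y \<and> f (en X) = en Y"

definition iso :: "'a stree \<Rightarrow> 'a stree \<Rightarrow> bool" where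
  "iso X Y \<longleftrightarrow> (\<exists>f. morphism f X Y \<and> bij_betw f (V X) (V Y) \<and> emap f ` E X = E Y)"

definition retraction :: "(nat \<Rightarrow> nat) \<Rightarrow> 'a stree \<Rightarrow> bool" where
  "retraction r X \<longleftrightarrow> morphism r X X \<and> (\<forall>v\<in>V X. r (r v) = r v)"

definition retract_image :: "'a stree \<Rightarrow> (nat \<Rightarrow> nat) \<Rightarrow> 'a stree" where
  "retract_image X r = \<lparr>V = r ` V X, E = emap r ` E X, st = r (st X), en = r (en X)\<rparr>"

definition pruned :: "'a stree \<Rightarrow> bool" where
  "pruned X \<longleftrightarrow> (\<forall>r. retraction r X \<longrightarrow> (\<forall>v\<in>V X. r v = v))"

text \<open>Z represents the isomorphism type of the pruned retract of X.\<close>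
definition pruned_retract_of :: "'a stree \<Rightarrow> 'a stree \<Rightarrow> bool" where
  "pruned_retract_of Z X \<longleftrightarrow>
     (\<exists>r. retraction r X \<and> pruned (retract_image X r) \<and> iso (retract_image X r) Z)"

definition trivial_tree :: "'a stree" where
  "trivial_tree = \<lparr>V = {0}, E = {}, st = 0, en = 0\<rparr>"

definition base_tree :: "'a \<Rightarrow> 'a stree" where
  "base_tree a = \<lparr>V = {0, 1}, E = {(0, a, 1)}, st = 0, en = 1\<rparr>"

text \<open>Unpruned product: disjoint copies (X on even, Y on odd numbers), with the end
 vertex of X identified with the start vertex of Y.\<close>
definition times_tree :: "'a stree \<Rightarrow> 'a stree \<Rightarrow> 'a stree" where
  "times_tree X Y =
    (let g = (\<lambda>w. if w = st Y then 2 * en X else 2 * w + 1)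
     in \<lparr>V = (\<lambda>v. 2 * v) ` V X \<union> g ` V Y,
         E = emap (\<lambda>v. 2 * v) ` E X \<union> emap g ` E Y,
         st = 2 * st X, en = g (en Y)\<rparr>)"

definition plus_tree :: "'a stree \<Rightarrow> 'a stree" where
  "plus_tree X = X\<lparr>en := st X\<rparr>"

definition star_tree :: "'a stree \<Rightarrow> 'a stree" where
  "star_tree X = X\<lparr>st := en X\<rparr>"

text \<open>The sub-(2,1,1,0)-algebra of T^1(Sigma) generated by the base trees, as a
 property of representing trees (closed under isomorphism).\<close>
inductive generated :: "'a stree \<Rightarrow> bool" where
  gen_base: "iso (base_tree a) Z \<Longrightarrow> generated Z"
| gen_one: "iso trivial_tree Z \<Longrightarrow> generated Z"
| gen_mult: "generated X \<Longrightarrow> generated Y \<Longrightarrow> pruned_retract_of Z (times_tree X Y) \<Longrightarrow> generated Z"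
| gen_plus: "generated X \<Longrightarrow> pruned_retract_of Z (plus_tree X) \<Longrightarrow> generated Z"
| gen_star: "generated X \<Longrightarrow> pruned_retract_of Z (star_tree X) \<Longrightarrow> generated Z"

end

(*
  Induction on a weight counting every edge twice and a coinciding start and end vertex once
  more. If start = end, some edge e is incident to that vertex; moving the end (resp. start)
  across e gives a lighter pruned tree Y with X = Y^+ (resp. X = Y^* ). If start and end
  differ, removing the first edge e of the path from start to end splits X into the part P
  hanging at the start vertex and the part Q containing the end, and X is the concatenation
  of P with eQ, or of e with Q when P is trivial. The factors of a concatenation are pruned,
  because a retraction of a factor extends to X by the identity; and X is the pruned retract
  of their unpruned product, being pruned and isomorphic to it.
*)

theory Submission
  imports Defs
begin

abbreviation uerel :: "(nat \<times> 'a \<times> nat) set \<Rightarrow> (nat \<times> nat) set" where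
  "uerel Es \<equiv> erel Es \<union> (erel Es)\<inverse>"

lemma uerel_rtrancl_sym: "(x, y) \<in> (uerel Es)\<^sup>* \<Longrightarrow> (y, x) \<in> (uerel Es)\<^sup>*"
  by (metis converse_Un converse_converse rtrancl_converseI sup_commute)

lemma erel_mono: "Es \<subseteq> Es' \<Longrightarrow> erel Es \<subseteq> erel Es'"
  unfolding erel_def by auto

lemma uerel_rtrancl_mono: "Es \<subseteq> Es' \<Longrightarrow> (uerel Es)\<^sup>* \<subseteq> (uerel Es')\<^sup>*"
  by (intro rtrancl_mono Un_mono erel_mono converse_mono[THEN iffD2])

lemma is_treeD:
  assumes "is_tree X"
  shows "finite (V X)" "finite (E X)" "card (V X) = card (E X) + 1"
    and "\<And>u b v. (u, b, v) \<in> E X \<Longrightarrow> u \<in> V X \<and> v \<in> V X"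
    and "\<And>u v. u \<in> V X \<Longrightarrow> v \<in> V X \<Longrightarrow> (u, v) \<in> (uerel (E X))\<^sup>*"
    and "st X \<in> V X" "en X \<in> V X" "(st X, en X) \<in> (erel (E X))\<^sup>*"
  using assms unfolding is_tree_def by blast+

lemma is_treeI:
  assumes "finite Vs" "finite Es" "\<forall>(u, b, v)\<in>Es. u \<in> Vs \<and> v \<in> Vs" "card Vs = card Es + 1"
    and c: "c \<in> Vs" and conn: "\<And>x. x \<in> Vs \<Longrightarrow> (c, x) \<in> (uerel Es)\<^sup>*"
    and "s \<in> Vs" "t \<in> Vs" "(s, t) \<in> (erel Es)\<^sup>*"
  shows "is_tree \<lparr>V = Vs, E = Es, st = s, en = t\<rparr>"
proof -
  have "(u, v) \<in> (uerel Es)\<^sup>*" if "u \<in> Vs" "v \<in> Vs" for u v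
    using rtrancl_trans[OF uerel_rtrancl_sym[OF conn] conn] that .
  then show ?thesis using assms unfolding is_tree_def by simp
qed

lemma is_tree_change_ends:
  assumes "is_tree X" "s \<in> V X" "t \<in> V X" "(s, t) \<in> (erel (E X))\<^sup>*"
  shows "is_tree (X\<lparr>st := s, en := t\<rparr>)"
  using assms unfolding is_tree_def by simp

text \<open>Each vertex other than the root picks an incident edge towards a vertex one step closer
  to the root; distinct vertices pick distinct edges.\<close>
lemma card_le_if_connected:
  fixes Es :: "(nat \<times> 'a \<times> nat) set"
  assumes fE: "finite Es" and fV: "finite Vs" and v0: "v0 \<in> Vs"
    and conn: "\<And>x. x \<in> Vs \<Longrightarrow> (v0, x) \<in> (uerel Es)\<^sup>*"
  shows "card Vs \<le> card Es + 1"
proof -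
  define d where "d x = (LEAST n. (v0, x) \<in> uerel Es ^^ n)" for x
  have d_path: "(v0, x) \<in> uerel Es ^^ d x" if "(v0, x) \<in> uerel Es ^^ n" for x n
    using that unfolding d_def by (rule LeastI)
  have d_min: "d x \<le> n" if "(v0, x) \<in> uerel Es ^^ n" for x n
    unfolding d_def using that by (rule Least_le)
  have parent: "\<exists>e\<in>Es. \<exists>y a. d x = Suc (d y) \<and> (e = (y, a, x) \<or> e = (x, a, y))"
    if x: "x \<in> Vs - {v0}" for x
  proof -
    have "(v0, x) \<in> uerel Es ^^ d x"
      using conn x by (metis DiffD1 d_path rtrancl_power)
    moreover obtain m where m: "d x = Suc m" using calculation x by (cases "d x") auto
    ultimately obtain y where y: "(v0, y) \<in> uerel Es ^^ m" "(y, x) \<in> uerel Es" by auto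
    have "(v0, x) \<in> uerel Es ^^ Suc (d y)" using d_path[OF y(1)] y(2) by auto
    then have "d y = m" using d_min[OF y(1)] d_min[of x] m by fastforce
    then show ?thesis using y(2) m unfolding erel_def by blast
  qed
  define pick where
    "pick x = (SOME e. e \<in> Es \<and> (\<exists>y a. d x = Suc (d y) \<and> (e = (y, a, x) \<or> e = (x, a, y))))" for x
  have pick: "pick x \<in> Es \<and> (\<exists>y a. d x = Suc (d y) \<and> (pick x = (y, a, x) \<or> pick x = (x, a, y)))"
    if "x \<in> Vs - {v0}" for x
    using someI_ex[OF parent[OF that, unfolded Bex_def]] unfolding pick_def .
  have "inj_on pick (Vs - {v0})"
  proof (rule inj_onI)
    fix x x' assume "x \<in> Vs - {v0}" "x' \<in> Vs - {v0}" "pick x = pick x'"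
    then show "x = x'" using pick[of x] pick[of x'] by auto
  qed
  then have "card (Vs - {v0}) \<le> card Es"
    using card_inj_on_le[OF _ _ fE] pick by blast
  then show ?thesis using v0 fV by (simp add: card_Diff_singleton)
qed

definition component :: "(nat \<times> 'a \<times> nat) set \<Rightarrow> nat set \<Rightarrow> nat \<Rightarrow> nat set" where
  "component Es Vs c = {x \<in> Vs. (c, x) \<in> (uerel Es)\<^sup>*}"

definition edges_from :: "(nat \<times> 'a \<times> nat) set \<Rightarrow> nat set \<Rightarrow> (nat \<times> 'a \<times> nat) set" where
  "edges_from Es C = {(u, b, v) \<in> Es. u \<in> C}"

context
  fixes Es :: "(nat \<times> 'a \<times> nat) set" and Vs :: "nat set" and c :: nat
  assumes ends: "\<forall>(u, b, v)\<in>Es. u \<in> Vs \<and> v \<in> Vs"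
begin

lemma component_edge_closed:
  assumes "y \<in> component Es Vs c" "(y, b, z) \<in> Es \<or> (z, b, y) \<in> Es"
  shows "z \<in> component Es Vs c"
  using assms ends unfolding component_def erel_def by (auto intro: rtrancl_into_rtrancl)

lemma edges_from_component_ends:
  "(u, b, v) \<in> edges_from Es (component Es Vs c) \<Longrightarrow> u \<in> component Es Vs c \<and> v \<in> component Es Vs c"
  unfolding edges_from_def using component_edge_closed by blast

lemma component_connected:
  assumes "x \<in> component Es Vs c"
  shows "(c, x) \<in> (uerel (edges_from Es (component Es Vs c)))\<^sup>*"
proof -
  let ?C = "component Es Vs c"
  have "(c, x) \<in> (uerel Es)\<^sup>*" using assms unfolding component_def by auto
  then show ?thesis
  proof (induction rule: rtrancl_induct)
    case (step y z)
    then obtain b where yz: "(y, b, z) \<in> Es \<or> (z, b, y) \<in> Es" unfolding erel_def by auto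
    then have "y \<in> ?C" using step(1) ends unfolding component_def by auto
    then have "(y, z) \<in> uerel (edges_from Es ?C)"
      using yz component_edge_closed unfolding edges_from_def erel_def by blast
    then show ?case using step(3) by (rule rtrancl_into_rtrancl[rotated])
  qed simp
qed

end

lemma rtrancl_uerel_remove_edge:
  assumes "(p, x) \<in> (uerel Es)\<^sup>*" "(p, a, q) \<in> Es"
  shows "(p, x) \<in> (uerel (Es - {(p, a, q)}))\<^sup>* \<or> (q, x) \<in> (uerel (Es - {(p, a, q)}))\<^sup>*"
  using assms(1)
proof (induction rule: rtrancl_induct)
  case (step y z)
  show ?case
  proof (cases "(y, z) \<in> uerel (Es - {(p, a, q)})")
    case True
    then show ?thesis using step(3) by (meson rtrancl_into_rtrancl)
  next
    case False
    with step(2) have "z = p \<or> z = q" unfolding erel_def by auto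
    then show ?thesis by auto
  qed
qed simp

text \<open>The components of p and q cover X. Were they to meet, X without the edge would still be
  connected, contradicting card (V X) = card (E X) + 1; the same count then forces both
  components to be trees.\<close>
lemma tree_remove_edge:
  assumes T: "is_tree X" and e: "(p, a, q) \<in> E X"
  obtains Vp Ep Vq Eq where
    "V X = Vp \<union> Vq" "Vp \<inter> Vq = {}" "p \<in> Vp" "q \<in> Vq" "E X = insert (p, a, q) (Ep \<union> Eq)"
    "is_tree \<lparr>V = Vp, E = Ep, st = p, en = p\<rparr>" "is_tree \<lparr>V = Vq, E = Eq, st = q, en = q\<rparr>"
    "\<And>z. (q, z) \<in> (erel (E X))\<^sup>* \<Longrightarrow> z \<in> Vq \<and> (q, z) \<in> (erel Eq)\<^sup>*"
proof -
  define E1 where "E1 = E X - {(p, a, q)}"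
  define Cp where "Cp = component E1 (V X) p"
  define Cq where "Cq = component E1 (V X) q"
  define Ep where "Ep = edges_from E1 Cp"
  define Eq where "Eq = edges_from E1 Cq"
  have ends: "\<forall>(u, b, v)\<in>E1. u \<in> V X \<and> v \<in> V X" using is_treeD(4)[OF T] unfolding E1_def by blast
  have pq: "p \<in> V X" "q \<in> V X" using is_treeD(4)[OF T e] by auto
  then have pCp: "p \<in> Cp" and qCq: "q \<in> Cq" unfolding Cp_def Cq_def component_def by auto
  have fin: "finite (V X)" "finite E1" using is_treeD(1,2)[OF T] unfolding E1_def by auto
  have cardE: "card (E X) = card E1 + 1"
    using card_Suc_Diff1[OF is_treeD(2)[OF T] e] unfolding E1_def by simp
  have cover: "V X = Cp \<union> Cq"
    using rtrancl_uerel_remove_edge[OF is_treeD(5)[OF T pq(1)] e]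
    unfolding Cp_def Cq_def component_def E1_def by auto
  have disjoint: "Cp \<inter> Cq = {}"
  proof (rule ccontr)
    assume "Cp \<inter> Cq \<noteq> {}"
    then have "(p, q) \<in> (uerel E1)\<^sup>*"
      unfolding Cp_def Cq_def component_def by (auto intro: rtrancl_trans uerel_rtrancl_sym)
    then have "(p, x) \<in> (uerel E1)\<^sup>*" if "x \<in> V X" for x
      using that cover unfolding Cp_def Cq_def component_def by (auto intro: rtrancl_trans)
    then have "card (V X) \<le> card E1 + 1" using card_le_if_connected[OF fin(2,1) pq(1)] by blast
    then show False using is_treeD(3)[OF T] cardE by simp
  qed
  have E1_split: "E1 = Ep \<union> Eq" using ends cover unfolding Ep_def Eq_def edges_from_def by blast
  have Ep_ends: "\<forall>(u, b, v)\<in>Ep. u \<in> Cp \<and> v \<in> Cp"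
    using edges_from_component_ends[OF ends] unfolding Ep_def Cp_def by blast
  have Eq_ends: "\<forall>(u, b, v)\<in>Eq. u \<in> Cq \<and> v \<in> Cq"
    using edges_from_component_ends[OF ends] unfolding Eq_def Cq_def by blast
  have fin_parts: "finite Cp" "finite Cq" "finite Ep" "finite Eq"
    using fin cover E1_split by (auto intro: finite_subset)
  have "card Cp \<le> card Ep + 1"
    using card_le_if_connected[OF fin_parts(3,1) pCp] component_connected[OF ends]
    unfolding Ep_def Cp_def by blast
  moreover have "card Cq \<le> card Eq + 1"
    using card_le_if_connected[OF fin_parts(4,2) qCq] component_connected[OF ends]
    unfolding Eq_def Cq_def by blast
  moreover have "card (V X) = card Cp + card Cq"
    using cover disjoint fin_parts by (simp add: card_Un_disjoint)
  moreover have "Ep \<inter> Eq = {}" using disjoint unfolding Ep_def Eq_def edges_from_def by blast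
  then have "card E1 = card Ep + card Eq" unfolding E1_split using fin_parts by (simp add: card_Un_disjoint)
  ultimately have cards: "card Cp = card Ep + 1" "card Cq = card Eq + 1"
    using is_treeD(3)[OF T] cardE by linarith+
  have "is_tree \<lparr>V = Cp, E = Ep, st = p, en = p\<rparr>"
    using fin_parts Ep_ends cards(1) pCp component_connected[OF ends]
    unfolding Ep_def Cp_def by (intro is_treeI) auto
  moreover have "is_tree \<lparr>V = Cq, E = Eq, st = q, en = q\<rparr>"
    using fin_parts Eq_ends cards(2) qCq component_connected[OF ends]
    unfolding Eq_def Cq_def by (intro is_treeI) auto
  moreover have "z \<in> Cq \<and> (q, z) \<in> (erel Eq)\<^sup>*" if "(q, z) \<in> (erel (E X))\<^sup>*" for z
    using that
  proof (induction rule: rtrancl_induct)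
    case (step y z)
    then obtain b where "(y, b, z) \<in> E X" unfolding erel_def by auto
    moreover have "y \<noteq> p" using step(3) pCp disjoint by blast
    ultimately have "(y, b, z) \<in> Eq" using step(3) unfolding Eq_def E1_def edges_from_def by auto
    then show ?case using step(3) Eq_ends unfolding erel_def by (blast intro: rtrancl_into_rtrancl)
  qed (simp add: qCq)
  moreover have "E X = insert (p, a, q) (Ep \<union> Eq)" using e E1_split unfolding E1_def by blast
  ultimately show thesis using that cover disjoint pCp qCq by blast
qed

lemma is_tree_add_pendant:
  assumes T: "is_tree T" and p: "p \<notin> V T"
  shows "is_tree \<lparr>V = insert p (V T), E = insert (p, a, st T) (E T), st = p, en = en T\<rparr>"
proof -
  let ?Es = "insert (p, a, st T) (E T)"
  have step: "(p, st T) \<in> erel ?Es" unfolding erel_def by blast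
  have "(st T, x) \<in> (uerel ?Es)\<^sup>*" if "x \<in> V T" for x
    using is_treeD(5)[OF T is_treeD(6)[OF T] that] uerel_rtrancl_mono[of "E T" ?Es] by blast
  then have conn: "(p, x) \<in> (uerel ?Es)\<^sup>*" if "x \<in> insert p (V T)" for x
    using that step by (auto intro: converse_rtrancl_into_rtrancl)
  have "(st T, en T) \<in> (erel ?Es)\<^sup>*"
    using is_treeD(8)[OF T] rtrancl_mono[OF erel_mono[of "E T" ?Es]] by blast
  then have path: "(p, en T) \<in> (erel ?Es)\<^sup>*" by (rule converse_rtrancl_into_rtrancl[OF step])
  have "(p, a, st T) \<notin> E T" using p is_treeD(4)[OF T] by blast
  then have card: "card (insert p (V T)) = card ?Es + 1"
    using is_treeD(1-3)[OF T] p by simp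
  have ends: "\<forall>(u, b, v)\<in>?Es. u \<in> insert p (V T) \<and> v \<in> insert p (V T)"
    using is_treeD(4,6)[OF T] by blast
  show ?thesis
    using is_treeD(1,2,7)[OF T]
    by (intro is_treeI[where c = p, OF _ _ ends card _ conn _ _ path]) simp_all
qed

lemma tree_no_loop:
  assumes "is_tree X" "(p, a, q) \<in> E X"
  shows "p \<noteq> q"
proof -
  obtain Vp Vq where "Vp \<inter> Vq = {}" "p \<in> Vp" "q \<in> Vq"
    using tree_remove_edge[OF assms] by metis
  then show ?thesis by blast
qed

lemma retractionD:
  assumes "retraction r X"
  shows "\<And>v. v \<in> V X \<Longrightarrow> r v \<in> V X" "\<And>e. e \<in> E X \<Longrightarrow> emap r e \<in> E X"
    and "r (st X) = st X" "r (en X) = en X" "\<And>v. v \<in> V X \<Longrightarrow> r (r v) = r v"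
  using assms unfolding retraction_def morphism_def by blast+

lemma emap_id: "emap id = id"
  by (auto simp: emap_def)

lemma iso_refl: "iso X X"
  unfolding iso_def morphism_def by (rule exI[of _ id]) (simp add: emap_id)

lemma pruned_retract_of_if_iso:
  assumes "pruned T" "iso T X"
  shows "pruned_retract_of X T"
proof -
  have "retraction id T" "retract_image T id = T"
    unfolding retraction_def morphism_def retract_image_def emap_id by simp_all
  then show ?thesis using assms unfolding pruned_retract_of_def by metis
qed

text \<open>A retraction of T is conjugated by the isomorphism into a retraction of X.\<close>
lemma pruned_if_iso:
  assumes iso: "iso T X" and P: "pruned X"
    and wf: "\<forall>(u, b, v)\<in>E T. u \<in> V T \<and> v \<in> V T" "st T \<in> V T" "en T \<in> V T"
  shows "pruned T"
  unfolding pruned_def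
proof (intro allI impI ballI)
  fix r v assume r: "retraction r T" and v: "v \<in> V T"
  obtain h where h: "morphism h T X" "bij_betw h (V T) (V X)" "emap h ` E T = E X"
    using iso unfolding iso_def by blast
  define g where "g = inv_into (V T) h"
  have gV: "g x \<in> V T" if "x \<in> V X" for x
    using bij_betw_apply[OF bij_betw_inv_into[OF h(2)] that] unfolding g_def .
  have gh: "g (h x) = x" if "x \<in> V T" for x
    using bij_betw_inv_into_left[OF h(2) that] unfolding g_def .
  have hV: "h x \<in> V X" if "x \<in> V T" for x using bij_betw_apply[OF h(2) that] .
  define r' where "r' x = h (r (g x))" for x
  have r'h: "r' (h x) = h (r x)" if "x \<in> V T" for x
    unfolding r'_def using gh[OF that] by simp
  have "retraction r' X"
    unfolding retraction_def morphism_def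
  proof (intro conjI ballI subsetI)
    show "y \<in> V X" if "y \<in> r' ` V X" for y
      using that unfolding r'_def by (auto intro!: hV retractionD(1)[OF r] gV)
    show "y \<in> E X" if y: "y \<in> emap r' ` E X" for y
    proof -
      obtain e where e: "e \<in> E T" "y = emap r' (emap h e)"
        using y unfolding h(3)[symmetric] image_image by blast
      then have "y = emap h (emap r e)"
        using wf(1) r'h by (cases e) (auto simp: emap_def)
      then show ?thesis using h(3) retractionD(2)[OF r e(1)] by blast
    qed
    show "r' (st X) = st X" "r' (en X) = en X"
      using r'h[OF wf(2)] r'h[OF wf(3)] h(1) retractionD(3,4)[OF r] unfolding morphism_def by auto
    show "r' (r' x) = r' x" if "x \<in> V X" for x
      using gV[OF that] gh retractionD(1,5)[OF r] unfolding r'_def by simp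
  qed
  then have "h (r v) = h v" using P hV[OF v] r'h[OF v] unfolding pruned_def by metis
  then show "r v = v" using h(2) v retractionD(1)[OF r] unfolding bij_betw_def inj_on_def by blast
qed

text \<open>A retraction of S extends by the identity to a retraction of X, provided S meets the
  rest of X only in its own start and end vertices.\<close>
lemma pruned_subtree:
  assumes P: "pruned X" and sub: "V S \<subseteq> V X" "E S \<subseteq> E X"
    and wf: "\<And>u b v. (u, b, v) \<in> E S \<Longrightarrow> u \<in> V S \<and> v \<in> V S"
    and attach: "\<And>u b v. (u, b, v) \<in> E X - E S \<Longrightarrow> {u, v} \<inter> V S \<subseteq> {st S, en S}"
    and ends: "{st X, en X} \<inter> V S \<subseteq> {st S, en S}"
  shows "pruned S"
  unfolding pruned_def
proof (intro allI impI ballI)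
  fix r v assume r: "retraction r S" and v: "v \<in> V S"
  define r' where "r' x = (if x \<in> V S then r x else x)" for x
  have r'_fix: "r' x = x" if "x \<in> V S \<longrightarrow> x \<in> {st S, en S}" for x
    using that retractionD(3,4)[OF r] unfolding r'_def by auto
  have "retraction r' X"
    unfolding retraction_def morphism_def
  proof (intro conjI ballI subsetI)
    show "y \<in> V X" if "y \<in> r' ` V X" for y
      using that sub(1) retractionD(1)[OF r] unfolding r'_def by auto
    show "y \<in> E X" if y: "y \<in> emap r' ` E X" for y
    proof -
      obtain u b w where e: "(u, b, w) \<in> E X" "y = emap r' (u, b, w)" using y by auto
      show ?thesis
      proof (cases "(u, b, w) \<in> E S")
        case True
        then have "y = emap r (u, b, w)" using e(2) wf unfolding r'_def emap_def by auto
        then show ?thesis using retractionD(2)[OF r True] sub(2) by blast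
      next
        case False
        then have "{u, w} \<inter> V S \<subseteq> {st S, en S}" using attach e(1) by simp
        then have "r' u = u" "r' w = w" by (auto intro: r'_fix)
        then show ?thesis using e unfolding emap_def by simp
      qed
    qed
    show "r' (st X) = st X" "r' (en X) = en X" using ends by (auto intro: r'_fix)
    show "r' (r' x) = r' x" if "x \<in> V X" for x
      using retractionD(1,5)[OF r] unfolding r'_def by auto
  qed
  then have "r' v = v" using P v sub(1) unfolding pruned_def by blast
  then show "r v = v" using v unfolding r'_def by simp
qed

lemma pruned_change_ends:
  assumes T: "is_tree X" and P: "pruned X" and "st X = en X" "st X \<in> {s, t}"
  shows "pruned (X\<lparr>st := s, en := t\<rparr>)"
  using assms is_treeD(4)[OF T] by (intro pruned_subtree[OF P]) auto

definition concat :: "'a stree \<Rightarrow> 'a stree \<Rightarrow> 'a stree \<Rightarrow> bool" where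
  "concat A B X \<longleftrightarrow>
     V A \<union> V B = V X \<and> V A \<inter> V B = {en A} \<and> E A \<union> E B = E X \<and>
     st A = st X \<and> st B = en A \<and> en B = en X"

lemma concat_pruned:
  assumes C: "concat A B X" and P: "pruned X" and TA: "is_tree A" and TB: "is_tree B"
  shows "pruned A" "pruned B"
proof -
  have glue: "V A \<inter> V B = {en A}" "st B = en A" and parts: "V A \<subseteq> V X" "V B \<subseteq> V X"
    "E A \<subseteq> E X" "E B \<subseteq> E X" "E X - E A \<subseteq> E B" "E X - E B \<subseteq> E A"
    and ends: "st X = st A" "en X = en B"
    using C unfolding concat_def by auto
  note wf = is_treeD(4)[OF TA] is_treeD(4)[OF TB]
  show "pruned A"
  proof (rule pruned_subtree[OF P parts(1,3) wf(1)])
    show "{u, v} \<inter> V A \<subseteq> {st A, en A}" if "(u, b, v) \<in> E X - E A" for u b v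
      using wf(2)[of u b v] parts(5) that glue(1) by blast
    show "{st X, en X} \<inter> V A \<subseteq> {st A, en A}"
      using ends is_treeD(7)[OF TB] glue(1) by auto
  qed
  show "pruned B"
  proof (rule pruned_subtree[OF P parts(2,4) wf(2)])
    show "{u, v} \<inter> V B \<subseteq> {st B, en B}" if "(u, b, v) \<in> E X - E B" for u b v
      using wf(1)[of u b v] parts(6) that glue(1) unfolding glue(2) by blast
    show "{st X, en X} \<inter> V B \<subseteq> {st B, en B}"
      using ends is_treeD(6)[OF TA] glue by auto
  qed
qed

text \<open>The copies of A and B inside the product are the even and the odd numbers (with
  the start of B moved onto the end of A), so halving undoes the relabelling.\<close>
lemma iso_times_tree_concat:
  assumes C: "concat A B X"
  shows "iso (times_tree A B) X"
proof -
  let ?T = "times_tree A B"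
  define g where "g w = (if w = st B then 2 * en A else 2 * w + 1)" for w
  have T: "V ?T = (\<lambda>v. 2 * v) ` V A \<union> g ` V B" "E ?T = emap (\<lambda>v. 2 * v) ` E A \<union> emap g ` E B"
    "st ?T = 2 * st A" "en ?T = g (en B)"
    unfolding times_tree_def g_def Let_def by simp_all
  have glue: "V A \<inter> V B = {en A}" "st B = en A" using C unfolding concat_def by auto
  define h where "h n = n div 2" for n :: nat
  have h: "h (2 * w) = w" "h (g w) = w" for w unfolding h_def g_def using glue(2) by auto
  have eh: "emap h (emap (\<lambda>v. 2 * v) e) = e" "emap h (emap g e) = e" for e
    using h by (cases e; simp add: emap_def)+
  have hV: "h ` V ?T = V X" and hE: "emap h ` E ?T = E X"
    using C unfolding T concat_def by (auto simp: image_Un image_image h eh)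
  have "inj_on h (V ?T)"
  proof (rule inj_onI)
    fix x y assume "x \<in> V ?T" "y \<in> V ?T" "h x = h y"
    moreover have "x = y" if "x' \<in> V A" "y' \<in> V B" "x = 2 * x'" "y = g y'" "h x = h y" for x y x' y'
    proof -
      have "x' = y'" using that h by metis
      then show ?thesis using that glue unfolding g_def by auto
    qed
    ultimately show "x = y" unfolding T by (elim UnE imageE) (metis h)+
  qed
  then show ?thesis
    unfolding iso_def morphism_def bij_betw_def
    using hV hE C h unfolding T concat_def by (intro exI[of _ h]) auto
qed

lemma pruned_retract_of_times_tree:
  assumes C: "concat A B X" and P: "pruned X" and TA: "is_tree A" and TB: "is_tree B"
  shows "pruned_retract_of X (times_tree A B)"
proof -
  have "\<forall>(u, b, v)\<in>E (times_tree A B). u \<in> V (times_tree A B) \<and> v \<in> V (times_tree A B)"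
    using is_treeD(4)[OF TA] is_treeD(4)[OF TB] unfolding times_tree_def Let_def
    by (auto simp: emap_def)
  moreover have "st (times_tree A B) \<in> V (times_tree A B)" "en (times_tree A B) \<in> V (times_tree A B)"
    using is_treeD(6,7)[OF TA] is_treeD(6,7)[OF TB] unfolding times_tree_def Let_def by auto
  ultimately show ?thesis
    using pruned_if_iso[OF iso_times_tree_concat[OF C] P] pruned_retract_of_if_iso
      iso_times_tree_concat[OF C] by blast
qed

lemma concat_card_edges:
  assumes C: "concat A B X" and TA: "is_tree A" and TB: "is_tree B" and TX: "is_tree X"
  shows "card (E X) = card (E A) + card (E B)"
proof -
  have "card (V X) + 1 = card (V A) + card (V B)"
    using C card_Un_Int[of "V A" "V B"] is_treeD(1)[OF TA] is_treeD(1)[OF TB]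
    unfolding concat_def by simp
  then show ?thesis using is_treeD(3)[OF TA] is_treeD(3)[OF TB] is_treeD(3)[OF TX] by simp
qed

definition weight :: "'a stree \<Rightarrow> nat" where
  "weight X = 2 * card (E X) + (if st X = en X then 1 else 0)"

lemma concat_weight_less:
  assumes C: "concat A B X" and T: "is_tree A" "is_tree B" "is_tree X"
    and ne: "E A \<noteq> {}" "E B \<noteq> {}"
  shows "weight A < weight X" "weight B < weight X"
proof -
  have "card (E A) > 0" "card (E B) > 0"
    using ne is_treeD(2)[OF T(1)] is_treeD(2)[OF T(2)] by (simp_all add: card_gt_0_iff)
  then show "weight A < weight X" "weight B < weight X"
    using concat_card_edges[OF C T] unfolding weight_def by simp_all
qed

lemma tree_edge_at_vertex:
  assumes T: "is_tree X" and "E X \<noteq> {}" and x: "x \<in> V X"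
  obtains b y where "(x, b, y) \<in> E X \<or> (y, b, x) \<in> E X"
proof -
  obtain u b v where e: "(u, b, v) \<in> E X" using \<open>E X \<noteq> {}\<close> by auto
  have "(x, u) \<in> (uerel (E X))\<^sup>*" using is_treeD(5)[OF T x] is_treeD(4)[OF T e] by blast
  then show thesis
  proof (cases rule: converse_rtranclE)
    case base
    then show ?thesis using that e by blast
  next
    case (step y)
    then show ?thesis using that unfolding erel_def by blast
  qed
qed

lemma path_tree_decomposition:
  assumes T: "is_tree X" and ne: "st X \<noteq> en X"
  obtains (base) a where "iso (base_tree a) X"
    | (concat) A B where "is_tree A" "is_tree B" "concat A B X" "E A \<noteq> {}" "E B \<noteq> {}"
proof -
  let ?s = "st X"
  obtain w where "(?s, w) \<in> erel (E X)" and w_en: "(w, en X) \<in> (erel (E X))\<^sup>*"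
    using is_treeD(8)[OF T] ne by (cases rule: converse_rtranclE) auto
  then obtain a where e: "(?s, a, w) \<in> E X" unfolding erel_def by blast
  obtain Vp Ep Vq Eq where V: "V X = Vp \<union> Vq" "Vp \<inter> Vq = {}" "?s \<in> Vp" "w \<in> Vq"
    and EX: "E X = insert (?s, a, w) (Ep \<union> Eq)"
    and TP: "is_tree \<lparr>V = Vp, E = Ep, st = ?s, en = ?s\<rparr>"
    and TQ0: "is_tree \<lparr>V = Vq, E = Eq, st = w, en = w\<rparr>"
    and reach: "\<And>z. (w, z) \<in> (erel (E X))\<^sup>* \<Longrightarrow> z \<in> Vq \<and> (w, z) \<in> (erel Eq)\<^sup>*"
    using tree_remove_edge[OF T e] by metis
  define Q where "Q = \<lparr>V = Vq, E = Eq, st = w, en = en X\<rparr>"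
  have TQ: "is_tree Q"
    using is_tree_change_ends[OF TQ0, of w "en X"] V(4) reach[OF w_en] unfolding Q_def by simp
  have sQ: "?s \<notin> V Q" using V(2,3) unfolding Q_def by auto
  show thesis
  proof (cases "Ep = {}")
    case False
    let ?A = "\<lparr>V = Vp, E = Ep, st = ?s, en = ?s\<rparr>"
    let ?B = "\<lparr>V = insert ?s Vq, E = insert (?s, a, w) Eq, st = ?s, en = en X\<rparr>"
    have TB: "is_tree ?B" using is_tree_add_pendant[OF TQ sQ, of a] unfolding Q_def by simp
    have "concat ?A ?B X" using V EX unfolding concat_def by auto
    from concat[OF TP TB this] False show thesis by simp
  next
    case Ep: True
    then have Vp: "Vp = {?s}"
      using is_treeD(3)[OF TP] V(3) by (simp add: card_1_singleton_iff) (metis singletonD)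
    show thesis
    proof (cases "Eq = {}")
      case True
      then have "Vq = {w}"
        using is_treeD(3)[OF TQ0] V(4) by (simp add: card_1_singleton_iff) (metis singletonD)
      with Vp have "V X = {?s, w}" "E X = {(?s, a, w)}" "en X = w" "?s \<noteq> w"
        using V EX Ep True reach[OF w_en] by auto
      then have "iso (base_tree a) X"
        unfolding iso_def morphism_def base_tree_def
        by (intro exI[of _ "\<lambda>n. if n = 0 then ?s else w"]) (auto simp: bij_betw_def inj_on_def emap_def)
      then show thesis by (rule base)
    next
      case False
      let ?A = "\<lparr>V = {?s, w}, E = {(?s, a, w)}, st = ?s, en = w\<rparr>"
      have "is_tree \<lparr>V = {w}, E = {}, st = w, en = w\<rparr>" unfolding is_tree_def by simp
      moreover have "?s \<noteq> w" using V(2-4) by blast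
      ultimately have TA: "is_tree ?A" using is_tree_add_pendant[of _ ?s a] by fastforce
      have "concat ?A Q X" using V Vp EX Ep unfolding concat_def Q_def by auto
      from concat[OF TA TQ this] False show thesis unfolding Q_def by simp
    qed
  qed
qed

lemma generated_edgeless:
  assumes T: "is_tree X" and "E X = {}"
  shows "generated X"
proof -
  have "V X = {st X}" "en X = st X"
    using is_treeD(3,6,7)[OF T] \<open>E X = {}\<close> by (auto simp: card_1_singleton_iff)
  then have "iso trivial_tree X"
    unfolding iso_def morphism_def trivial_tree_def using \<open>E X = {}\<close>
    by (intro exI[of _ "\<lambda>_. st X"]) (simp add: bij_betw_def)
  then show ?thesis by (rule gen_one)
qed

lemma generated_loop_step:
  fixes X :: "'a stree"
  assumes T: "is_tree X" and P: "pruned X" and "E X \<noteq> {}" and loop: "st X = en X"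
    and IH: "\<And>Y :: 'a stree. weight Y < weight X \<Longrightarrow> is_tree Y \<Longrightarrow> pruned Y \<Longrightarrow> generated Y"
  shows "generated X"
proof -
  obtain b w where "(st X, b, w) \<in> E X \<or> (w, b, st X) \<in> E X"
    using tree_edge_at_vertex[OF T \<open>E X \<noteq> {}\<close> is_treeD(6)[OF T]] by metis
  then show ?thesis
  proof
    assume e: "(st X, b, w) \<in> E X"
    let ?Y = "X\<lparr>st := st X, en := w\<rparr>"
    have "(st X, w) \<in> (erel (E X))\<^sup>*" using e unfolding erel_def by blast
    then have "is_tree ?Y"
      using is_tree_change_ends[OF T is_treeD(6)[OF T]] is_treeD(4)[OF T e] by blast
    moreover have "pruned ?Y" using pruned_change_ends[OF T P loop, of "st X" w] by simp
    moreover have "weight ?Y < weight X"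
      using loop tree_no_loop[OF T e] unfolding weight_def by simp
    ultimately have "generated ?Y" using IH by blast
    moreover have "plus_tree ?Y = X" using loop unfolding plus_tree_def by simp
    ultimately show ?thesis using gen_plus pruned_retract_of_if_iso[OF P iso_refl] by metis
  next
    assume e: "(w, b, st X) \<in> E X"
    let ?Y = "X\<lparr>st := w, en := en X\<rparr>"
    have "(w, en X) \<in> (erel (E X))\<^sup>*" using e loop unfolding erel_def by auto
    then have "is_tree ?Y"
      using is_tree_change_ends[OF T _ is_treeD(7)[OF T]] is_treeD(4)[OF T e] by blast
    moreover have "pruned ?Y" using pruned_change_ends[OF T P loop, of w "en X"] loop by simp
    moreover have "weight ?Y < weight X"
      using loop tree_no_loop[OF T e] unfolding weight_def by simp
    ultimately have "generated ?Y" using IH by blast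
    moreover have "star_tree ?Y = X" using loop unfolding star_tree_def by simp
    ultimately show ?thesis using gen_star pruned_retract_of_if_iso[OF P iso_refl] by metis
  qed
qed

lemma generated_path_step:
  fixes X :: "'a stree"
  assumes T: "is_tree X" and P: "pruned X" and "st X \<noteq> en X"
    and IH: "\<And>Y :: 'a stree. weight Y < weight X \<Longrightarrow> is_tree Y \<Longrightarrow> pruned Y \<Longrightarrow> generated Y"
  shows "generated X"
  using T \<open>st X \<noteq> en X\<close>
proof (cases rule: path_tree_decomposition)
  case (base a)
  then show ?thesis by (rule gen_base)
next
  case (concat A B)
  then have "generated A" "generated B"
    using IH concat_weight_less[OF concat(3,1,2) T] concat_pruned[OF concat(3) P] by blast+
  then show ?thesis
    using gen_mult pruned_retract_of_times_tree[OF concat(3) P concat(1,2)] by blast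
qed

theorem proposition5p1:
  fixes X :: "'a stree"
  assumes "is_tree X" and "pruned X"
  shows "generated X"
  using assms
proof (induction "weight X" arbitrary: X rule: less_induct)
  case less
  then have IH: "\<And>Y :: 'a stree. weight Y < weight X \<Longrightarrow> is_tree Y \<Longrightarrow> pruned Y \<Longrightarrow> generated Y"
    by blast
  consider "E X = {}" | "E X \<noteq> {}" "st X = en X" | "st X \<noteq> en X" by blast
  then show ?case
  proof cases
    case 1
    then show ?thesis using generated_edgeless less.prems(1) by blast
  next
    case 2
    then show ?thesis using generated_loop_step less.prems IH by blast
  next
    case 3
    then show ?thesis using generated_path_step less.prems IH by blast
  qed
qed

end
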